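(* Let $f$ be such that $f(t)\to0$ as $t\to\infty$ and $f$ is eventually decreasing, and $f\in C^2(0,\infty)$ is convex on $(0,\infty)$ with $f''$ monotone on some interval $(0,\epsilon)$. (a) If moreover $f(0)$ is finite and there exists $\sigma_1\in(0,1)$ with $\lim_{t\to0}t^{\sigma_1}f'(t)=0$, then $\lim_{\omega\to\infty}\omega^{2-\sigma_1}\mathcal F_{\cos}(\omega)=0$ and $\lim_{\omega\to\infty}\omega\mathcal F_{\sin}(\omega)=f(0)$. (b) If moreover $f(0)$ is infinite and there exists $\sigma_2\in(0,1)$ with $\lim_{t\to0}t^{\sigma_2}f(t)\in(0,\infty)$, then $\lim_{\omega\to\infty}\omega^{1-\sigma_2}\mathcal F_{\cos}(\omega)\in(0,\infty)$ and $\lim_{\omega\to\infty}\omega^{1-\sigma_2}\mathcal F_{\sin}(\omega)\in(0,\infty)$.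
   Context: For $\omega\ne0$, $\mathcal F_{\cos}(\omega)=\int_0^\infty f(t)\cos(t\omega)dt$ and $\mathcal F_{\sin}(\omega)=\int_0^\infty f(t)\sin(t\omega)dt$ (improper integrals). Here $f$ is defined on $[0,\infty)$ (extended evenly to $\mathbb{R}$), real-valued on $(0,\infty)$, with $f(0)$ possibly $+\infty$. *)

theory Defs
  imports "HOL-Analysis.Analysis"
begin

definition improper_integral_0_inf :: "(real \<Rightarrow> real) \<Rightarrow> real" where
  "improper_integral_0_inf g =
     Lim (at_right 0 \<times>\<^sub>F at_top) (\<lambda>(a, b). integral {a..b} g)"

definition Fcos :: "(real \<Rightarrow> real) \<Rightarrow> real \<Rightarrow> real" where
  "Fcos f \<omega> = improper_integral_0_inf (\<lambda>t. f t * cos (t * \<omega>))"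

definition Fsin :: "(real \<Rightarrow> real) \<Rightarrow> real \<Rightarrow> real" where
  "Fsin f \<omega> = improper_integral_0_inf (\<lambda>t. f t * sin (t * \<omega>))"

end

theory Submission
  imports Defs "HOL-Real_Asymp.Real_Asymp"
begin

(* (a) Integrating by parts, w Fcos(w) = - int f'(t) sin(tw) dt and
   w Fsin(w) = f(0) + int f'(t) cos(tw) dt.  Convexity makes -f' nonnegative and decreasing,
   so by the second mean value theorem the part of these integrals beyond m is at most
   4 |f'(m)| / w.  For the cosine transform take m = 1/w: since |f'(t)| = o(t^-s1), both the
   part below and the part beyond 1/w are o(w^(s1-1)).  For the sine transform fix m close to 0,
   so that the part below m is at most f(0) - f(m).

   (b) Near 0, f(t) is close to c t^-s2, and the substitution u = tw turns
   w^(1-s2) int c t^-s2 k(tw) dt into c int u^-s2 k(u) du for k = cos, sin.  The error is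
   small on (0, U/w) by this approximation and on (U/w, inf) by the second mean value theorem,
   once U is large.  The limits c int u^-s2 k(u) du are positive, since integration by parts
   rewrites them as positive multiples of int u^q (1 - cos u) du. *)

section \<open>Improper integrals over (0, \<infinity>)\<close>

lemma Cauchy_filter_convergent:
  fixes \<phi> :: "'a \<Rightarrow> 'b::complete_space"
  assumes "F \<noteq> bot"
    and "\<And>e. e > 0 \<Longrightarrow> \<exists>P. eventually P F \<and> (\<forall>x y. P x \<longrightarrow> P y \<longrightarrow> dist (\<phi> x) (\<phi> y) < e)"
  shows "\<exists>L. (\<phi> \<longlongrightarrow> L) F"
proof -
  have "cauchy_filter (filtermap \<phi> F)"
    unfolding cauchy_filter_metric_filtermap using assms(2) by meson
  moreover have "filtermap \<phi> F \<noteq> bot"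
    using assms(1) by (simp add: filtermap_bot_iff)
  ultimately obtain L where "filtermap \<phi> F \<le> nhds L"
    using cauchy_filter_complete_converges[of "filtermap \<phi> F" UNIV] complete_UNIV by auto
  then show ?thesis
    unfolding filterlim_def by blast
qed

lemma eventually_at_right_0_prod_at_topI:
  fixes d B :: real
  assumes "d > 0" and "\<And>a b. 0 < a \<Longrightarrow> a < d \<Longrightarrow> B < b \<Longrightarrow> P (a, b)"
  shows "eventually P (at_right 0 \<times>\<^sub>F at_top)"
proof -
  have "eventually (\<lambda>a. 0 < a \<and> a < d) (at_right 0)"
    using assms(1) eventually_at_right_field by blast
  from eventually_prodI[OF this eventually_gt_at_top[of B]] show ?thesis
    by (rule eventually_mono) (use assms(2) in force)
qed

lemma tendsto_abs_diff_le:
  fixes \<phi> \<psi> :: "'a \<Rightarrow> real"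
  assumes "F \<noteq> bot" "(\<phi> \<longlongrightarrow> L) F" "(\<psi> \<longlongrightarrow> M) F"
    and "eventually (\<lambda>x. \<bar>\<phi> x - c\<bar> \<le> \<psi> x) F"
  shows "\<bar>L - c\<bar> \<le> M"
proof -
  have "((\<lambda>x. \<bar>\<phi> x - c\<bar>) \<longlongrightarrow> \<bar>L - c\<bar>) F"
    by (intro tendsto_rabs tendsto_diff assms(2) tendsto_const)
  then show ?thesis
    using tendsto_le[OF assms(1,3)] assms(4) by blast
qed

(* Unlike the value improper_integral_0_inf g, which is an arbitrary Lim when the integrals
   diverge, this records convergence. *)
definition has_improper_integral_0_inf :: "(real \<Rightarrow> real) \<Rightarrow> real \<Rightarrow> bool" where
  "has_improper_integral_0_inf g I \<longleftrightarrow>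
     ((\<lambda>p. integral {fst p..snd p} g) \<longlongrightarrow> I) (at_right 0 \<times>\<^sub>F at_top)"

lemma at_right_0_prod_at_top_neq_bot: "at_right (0::real) \<times>\<^sub>F at_top \<noteq> (bot :: (real \<times> real) filter)"
  by (simp add: prod_filter_eq_bot)

lemma improper_integral_0_inf_eq:
  "has_improper_integral_0_inf g I \<Longrightarrow> improper_integral_0_inf g = I"
  unfolding has_improper_integral_0_inf_def improper_integral_0_inf_def case_prod_unfold
  by (rule tendsto_Lim[OF at_right_0_prod_at_top_neq_bot])

lemma has_improper_integral_0_inf_cmult:
  "has_improper_integral_0_inf g I \<Longrightarrow> has_improper_integral_0_inf (\<lambda>t. c * g t) (c * I)"
  unfolding has_improper_integral_0_inf_def by (simp add: tendsto_mult_left)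

lemma has_improper_integral_0_inf_diff:
  assumes "has_improper_integral_0_inf g I" "has_improper_integral_0_inf h J"
    and "\<And>a b. 0 < a \<Longrightarrow> g integrable_on {a..b}" "\<And>a b. 0 < a \<Longrightarrow> h integrable_on {a..b}"
  shows "has_improper_integral_0_inf (\<lambda>t. g t - h t) (I - J)"
proof -
  have "eventually (\<lambda>p. integral {fst p..snd p} g - integral {fst p..snd p} h =
      integral {fst p..snd p} (\<lambda>t. g t - h t)) (at_right 0 \<times>\<^sub>F at_top)"
    by (rule eventually_at_right_0_prod_at_topI[where d=1 and B=0])
      (simp_all add: integral_diff assms(3,4))
  with assms(1,2) show ?thesis
    unfolding has_improper_integral_0_inf_def using tendsto_cong tendsto_diff by fast
qed

lemma has_improper_integral_0_inf_cong:
  assumes "has_improper_integral_0_inf g I" and "\<And>t. 0 < t \<Longrightarrow> g t = h t"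
  shows "has_improper_integral_0_inf h I"
proof -
  have "eventually (\<lambda>p. integral {fst p..snd p} g = integral {fst p..snd p} h) (at_right 0 \<times>\<^sub>F at_top)"
    by (rule eventually_at_right_0_prod_at_topI[where d=1 and B=0]) (auto intro!: integral_cong assms(2))
  with assms(1) show ?thesis
    unfolding has_improper_integral_0_inf_def using tendsto_cong by fast
qed

lemma has_improper_integral_0_inf_bound:
  assumes "has_improper_integral_0_inf g I" and "d > 0"
    and "(r \<longlongrightarrow> 0) (at_right 0)" "(s \<longlongrightarrow> 0) at_top"
    and "\<And>a b. 0 < a \<Longrightarrow> a < d \<Longrightarrow> B < b \<Longrightarrow> \<bar>integral {a..b} g - c\<bar> \<le> r a + s b + R"
  shows "\<bar>I - c\<bar> \<le> R"
proof -
  have "((\<lambda>p. r (fst p) + s (snd p) + R) \<longlongrightarrow> 0 + 0 + R) (at_right 0 \<times>\<^sub>F at_top)"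
    by (intro tendsto_add tendsto_const filterlim_compose[OF assms(3) filterlim_fst]
        filterlim_compose[OF assms(4) filterlim_snd])
  moreover have "eventually (\<lambda>p. \<bar>integral {fst p..snd p} g - c\<bar> \<le> r (fst p) + s (snd p) + R)
      (at_right 0 \<times>\<^sub>F at_top)"
    using assms(5) by (intro eventually_at_right_0_prod_at_topI[OF assms(2)]) simp
  ultimately show ?thesis
    using assms(1) tendsto_abs_diff_le[OF at_right_0_prod_at_top_neq_bot]
    unfolding has_improper_integral_0_inf_def by simp
qed

lemma has_improper_integral_0_inf_Cauchy:
  fixes G :: "real \<Rightarrow> real"
  assumes int: "\<And>a b. 0 < a \<Longrightarrow> a \<le> b \<Longrightarrow> G integrable_on {a..b}"
    and at_0: "\<And>e. e > 0 \<Longrightarrow>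
      \<exists>d>0. \<forall>a a'. 0 < a \<longrightarrow> a \<le> a' \<longrightarrow> a' < d \<longrightarrow> \<bar>integral {a..a'} G\<bar> < e"
    and at_inf: "\<And>e. e > 0 \<Longrightarrow>
      \<exists>B. \<forall>b b'. B \<le> b \<longrightarrow> b \<le> b' \<longrightarrow> \<bar>integral {b..b'} G\<bar> < e"
  shows "has_improper_integral_0_inf G (improper_integral_0_inf G)"
proof -
  have split: "integral {a..b} G + integral {b..c} G = integral {a..c} G"
    if "0 < a" "a \<le> b" "b \<le> c" for a b c
    using that by (intro Henstock_Kurzweil_Integration.integral_combine int) auto
  have "\<exists>L. ((\<lambda>a. integral {a..1} G) \<longlongrightarrow> L) (at_right 0)"
  proof (rule Cauchy_filter_convergent)
    fix e :: real assume "e > 0"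
    then obtain d where d: "d > 0"
      "\<And>a a'. 0 < a \<Longrightarrow> a \<le> a' \<Longrightarrow> a' < d \<Longrightarrow> \<bar>integral {a..a'} G\<bar> < e"
      using at_0 by blast
    have *: "dist (integral {x..1} G) (integral {y..1} G) < e"
      if "0 < x" "x \<le> y" "y < min d 1" for x y
      using split[of x y 1] d(2)[of x y] that by (simp add: dist_real_def)
    show "\<exists>P. eventually P (at_right 0) \<and>
        (\<forall>x y. P x \<longrightarrow> P y \<longrightarrow> dist (integral {x..1} G) (integral {y..1} G) < e)"
    proof (intro exI conjI allI impI)
      show "eventually (\<lambda>x. 0 < x \<and> x < min d 1) (at_right 0)"
        using d(1) by (auto simp: eventually_at_right_field intro!: exI[of _ "min d 1"])
      fix x y assume "0 < x \<and> x < min d 1" "0 < y \<and> y < min d 1"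
      then show "dist (integral {x..1} G) (integral {y..1} G) < e"
        using *[of x y] *[of y x] by (cases "x \<le> y") (auto simp: dist_commute)
    qed
  qed simp
  moreover have "\<exists>L. ((\<lambda>b. integral {1..b} G) \<longlongrightarrow> L) at_top"
  proof (rule Cauchy_filter_convergent)
    fix e :: real assume "e > 0"
    then obtain B where B: "\<And>b b'. B \<le> b \<Longrightarrow> b \<le> b' \<Longrightarrow> \<bar>integral {b..b'} G\<bar> < e"
      using at_inf by blast
    have *: "dist (integral {1..x} G) (integral {1..y} G) < e" if "max B 1 \<le> x" "x \<le> y" for x y
      using split[of 1 x y] B[of x y] that by (simp add: dist_real_def)
    show "\<exists>P. eventually P at_top \<and>
        (\<forall>x y. P x \<longrightarrow> P y \<longrightarrow> dist (integral {1..x} G) (integral {1..y} G) < e)"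
    proof (intro exI conjI allI impI)
      show "eventually (\<lambda>x. max B 1 \<le> x) at_top" by (rule eventually_ge_at_top)
      fix x y assume "max B 1 \<le> x" "max B 1 \<le> y"
      then show "dist (integral {1..x} G) (integral {1..y} G) < e"
        using *[of x y] *[of y x] by (cases "x \<le> y") (auto simp: dist_commute)
    qed
  qed simp
  ultimately obtain L0 Linf where
    lim_0: "((\<lambda>a. integral {a..1} G) \<longlongrightarrow> L0) (at_right 0)" and
    lim_inf: "((\<lambda>b. integral {1..b} G) \<longlongrightarrow> Linf) at_top"
    by blast
  have "((\<lambda>p. integral {fst p..1} G + integral {1..snd p} G) \<longlongrightarrow> L0 + Linf) (at_right 0 \<times>\<^sub>F at_top)"
    by (intro tendsto_add filterlim_compose[OF lim_0 filterlim_fst] filterlim_compose[OF lim_inf filterlim_snd])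
  moreover have "eventually (\<lambda>p. integral {fst p..1} G + integral {1..snd p} G =
      integral {fst p..snd p} G) (at_right 0 \<times>\<^sub>F at_top)"
    by (rule eventually_at_right_0_prod_at_topI[where d=1 and B=1]) (simp_all add: split)
  ultimately have "has_improper_integral_0_inf G (L0 + Linf)"
    unfolding has_improper_integral_0_inf_def using tendsto_cong by fast
  then show ?thesis
    using improper_integral_0_inf_eq by metis
qed

lemma integral_rescale:
  fixes g :: "real \<Rightarrow> real"
  assumes "w > 0"
  shows "integral {a..b} (\<lambda>t. g (t * w)) = integral {a * w..b * w} g / w"
  using integral_stretch_real[of w "a * w" "b * w" g] assms by (simp add: mult.commute)

lemma has_improper_integral_0_inf_rescale:
  fixes g :: "real \<Rightarrow> real"
  assumes "has_improper_integral_0_inf g I" and "w > 0"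
  shows "has_improper_integral_0_inf (\<lambda>t. g (t * w)) (I / w)"
proof -
  have "filterlim (\<lambda>p. (fst p * w, snd p * w)) (at_right 0 \<times>\<^sub>F at_top) (at_right 0 \<times>\<^sub>F at_top)"
  proof (intro filterlim_Pair)
    have "filterlim (\<lambda>a. a * w) (at_right 0) (at_right 0)"
      using assms(2) by (auto simp: filterlim_at eventually_at_right_field intro!: tendsto_eq_intros exI[of _ 1])
    then show "filterlim (\<lambda>p. fst p * w) (at_right 0) (at_right 0 \<times>\<^sub>F at_top)"
      by (rule filterlim_compose[OF _ filterlim_fst])
    have "filterlim (\<lambda>b. b * w) at_top at_top"
      using assms(2) by (intro filterlim_at_top_mult_tendsto_pos[OF tendsto_const] filterlim_ident)
    then show "filterlim (\<lambda>p. snd p * w) at_top (at_right 0 \<times>\<^sub>F at_top)"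
      by (rule filterlim_compose[OF _ filterlim_snd])
  qed
  from filterlim_compose[OF assms(1)[unfolded has_improper_integral_0_inf_def] this]
  show ?thesis
    unfolding has_improper_integral_0_inf_def integral_rescale[OF assms(2)]
    by (intro tendsto_divide tendsto_const) (use assms(2) in auto)
qed

section \<open>Estimates for oscillatory integrals\<close>

lemma fundamental_theorem_of_calculus_real:
  fixes F F' :: "real \<Rightarrow> real"
  assumes "a \<le> b" and "\<And>x. x \<in> {a..b} \<Longrightarrow> (F has_real_derivative F' x) (at x)"
  shows "(F' has_integral F b - F a) {a..b}"
  using assms(2)
  by (intro fundamental_theorem_of_calculus[OF assms(1)])
    (auto simp: has_real_derivative_iff_has_vector_derivative[symmetric] intro: has_field_derivative_at_within)

lemma integral_by_parts_real:
  fixes u v u' v' :: "real \<Rightarrow> real"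
  assumes "a \<le> b"
    and "\<And>x. x \<in> {a..b} \<Longrightarrow> (u has_real_derivative u' x) (at x)"
    and "\<And>x. x \<in> {a..b} \<Longrightarrow> (v has_real_derivative v' x) (at x)"
    and "continuous_on {a..b} (\<lambda>x. u' x * v x)" "continuous_on {a..b} (\<lambda>x. u x * v' x)"
  shows "integral {a..b} (\<lambda>x. u x * v' x) = u b * v b - u a * v a - integral {a..b} (\<lambda>x. u' x * v x)"
proof -
  have "((\<lambda>x. u' x * v x + u x * v' x) has_integral u b * v b - u a * v a) {a..b}"
    using assms(1-3) by (intro fundamental_theorem_of_calculus_real) (auto intro!: derivative_eq_intros)
  then have "integral {a..b} (\<lambda>x. u' x * v x + u x * v' x) = u b * v b - u a * v a"
    by (rule integral_unique)
  moreover have "integral {a..b} (\<lambda>x. u' x * v x + u x * v' x) =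
      integral {a..b} (\<lambda>x. u' x * v x) + integral {a..b} (\<lambda>x. u x * v' x)"
    by (intro integral_add integrable_continuous_real assms(4,5))
  ultimately show ?thesis
    by simp
qed

lemma integral_powr_neg_le:
  fixes s :: real
  assumes "0 < a" "a \<le> c" "0 \<le> s" "s < 1"
  shows "integral {a..c} (\<lambda>t. t powr - s) \<le> c powr (1 - s) / (1 - s)"
proof -
  have int: "((\<lambda>t. t powr - s) has_integral c powr (1 - s) / (1 - s)) {0..c}"
    using has_integral_powr_from_0[of "- s" c] assms by simp
  have "integral {a..c} (\<lambda>t. t powr - s) \<le> integral {0..c} (\<lambda>t. t powr - s)"
  proof (rule integral_subset_le)
    show "(\<lambda>t. t powr - s) integrable_on {a..c}"
      using assms(1) by (intro integrable_continuous_real continuous_intros) auto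
  qed (use assms(1) int in auto)
  with int show ?thesis
    by (simp add: integral_unique)
qed

lemma abs_integral_le_powr_bound:
  fixes u :: "real \<Rightarrow> real"
  assumes "0 < a" "a \<le> m" "0 \<le> s" "s < 1" "continuous_on {a..m} u"
    and u_le: "\<And>t. a \<le> t \<Longrightarrow> t \<le> m \<Longrightarrow> \<bar>u t\<bar> \<le> C * t powr - s"
  shows "\<bar>integral {a..m} u\<bar> \<le> C * (m powr (1 - s) / (1 - s))"
proof -
  have "0 \<le> C * a powr - s"
    using u_le[of a] assms(2) by (meson abs_ge_zero order_trans order_refl)
  then have C: "0 \<le> C"
    using assms(1) by (simp add: zero_le_mult_iff)
  have "(\<lambda>t. C * t powr - s) integrable_on {a..m}"
    using assms(1) by (intro integrable_continuous_real continuous_intros) auto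
  from Henstock_Kurzweil_Integration.integral_norm_bound_integral[OF
      integrable_continuous_real[OF assms(5)] this]
  have "\<bar>integral {a..m} u\<bar> \<le> integral {a..m} (\<lambda>t. C * t powr - s)"
    using u_le by simp
  also have "\<dots> = C * integral {a..m} (\<lambda>t. t powr - s)"
    by simp
  also have "\<dots> \<le> C * (m powr (1 - s) / (1 - s))"
    using integral_powr_neg_le[OF assms(1-4)] C by (rule mult_left_mono)
  finally show ?thesis .
qed

lemma abs_integral_antimono_mult_le:
  fixes h g :: "real \<Rightarrow> real"
  assumes "g integrable_on {a..b}" "a \<le> b"
    and "\<And>c d. a \<le> c \<Longrightarrow> c \<le> d \<Longrightarrow> d \<le> b \<Longrightarrow> \<bar>integral {c..d} g\<bar> \<le> M"
    and "\<And>x y. a \<le> x \<Longrightarrow> x \<le> y \<Longrightarrow> y \<le> b \<Longrightarrow> h y \<le> h x"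
    and "h b \<ge> 0"
  shows "\<bar>integral {a..b} (\<lambda>x. h x * g x)\<bar> \<le> 2 * h a * M"
proof -
  obtain c where c: "c \<in> {a..b}" and mvt:
    "((\<lambda>x. - h x * g x) has_integral - h a * integral {a..c} g + - h b * integral {c..b} g) {a..b}"
    using second_mean_value_theorem_full[OF assms(1,2), of "\<lambda>x. - h x"] assms(4) by force
  have "((\<lambda>x. h x * g x) has_integral h a * integral {a..c} g + h b * integral {c..b} g) {a..b}"
    using has_integral_neg[OF mvt] by (simp add: add.commute)
  then have eq: "integral {a..b} (\<lambda>x. h x * g x) = h a * integral {a..c} g + h b * integral {c..b} g"
    by (rule integral_unique)
  have h: "0 \<le> h b" "h b \<le> h a"
    using assms(2,4,5) by auto
  have "\<bar>h a * integral {a..c} g\<bar> \<le> h a * M"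
    using assms(3)[of a c] c h by (auto simp: abs_mult intro!: mult_left_mono)
  moreover have "\<bar>h b * integral {c..b} g\<bar> \<le> h b * M"
    using assms(3)[of c b] c h by (auto simp: abs_mult intro!: mult_left_mono)
  moreover have "h b * M \<le> h a * M"
    using assms(3)[of a a] assms(2) h by (intro mult_right_mono) auto
  ultimately show ?thesis
    unfolding eq by linarith
qed

lemma abs_integral_rescale_le:
  fixes k :: "real \<Rightarrow> real"
  assumes "\<And>c d. c \<le> d \<Longrightarrow> \<bar>integral {c..d} k\<bar> \<le> M" and "w > 0" "c \<le> d"
  shows "\<bar>integral {c..d} (\<lambda>t. k (t * w))\<bar> \<le> M / w"
  using assms(1)[of "c * w" "d * w"] assms(2,3)
  by (simp add: integral_rescale abs_div divide_right_mono)

lemma abs_integral_cos_le: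
  fixes c d :: real
  assumes "c \<le> d"
  shows "\<bar>integral {c..d} cos\<bar> \<le> 2"
proof -
  have "(cos has_integral sin d - sin c) {c..d}"
    by (rule fundamental_theorem_of_calculus_real[OF assms]) (rule DERIV_sin)
  then have "integral {c..d} cos = sin d - sin c"
    by (rule integral_unique)
  then show ?thesis
    using abs_sin_le_one[of c] abs_sin_le_one[of d] by linarith
qed

lemma abs_integral_sin_le:
  fixes c d :: real
  assumes "c \<le> d"
  shows "\<bar>integral {c..d} sin\<bar> \<le> 2"
proof -
  have "(sin has_integral - cos d - - cos c) {c..d}"
    by (rule fundamental_theorem_of_calculus_real[OF assms]) (auto intro!: derivative_eq_intros)
  then have "integral {c..d} sin = - cos d - - cos c"
    by (rule integral_unique)
  then show ?thesis
    using abs_cos_le_one[of c] abs_cos_le_one[of d] by linarith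
qed

lemma has_improper_integral_0_inf_antimono_mult:
  fixes h g :: "real \<Rightarrow> real"
  assumes g_cont: "continuous_on UNIV g" and g_bounded: "\<And>x. \<bar>g x\<bar> \<le> 1"
    and g_integral: "\<And>c d. c \<le> d \<Longrightarrow> \<bar>integral {c..d} g\<bar> \<le> M"
    and h_cont: "continuous_on {0<..} h"
    and h_antimono: "\<And>x y. 0 < x \<Longrightarrow> x \<le> y \<Longrightarrow> h y \<le> h x"
    and h_nonneg: "\<And>x. 0 < x \<Longrightarrow> 0 \<le> h x"
    and h_tendsto: "(h \<longlongrightarrow> 0) at_top"
    and s: "0 \<le> s" "s < 1" and d: "d > 0"
    and h_le: "\<And>t. 0 < t \<Longrightarrow> t < d \<Longrightarrow> h t \<le> C * t powr - s"
  shows "has_improper_integral_0_inf (\<lambda>t. h t * g t) (improper_integral_0_inf (\<lambda>t. h t * g t))"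
proof (rule has_improper_integral_0_inf_Cauchy)
  show "(\<lambda>t. h t * g t) integrable_on {a..b}" if "0 < a" "a \<le> b" for a b
    using that by (intro integrable_continuous_real continuous_intros continuous_on_subset[OF h_cont]
        continuous_on_subset[OF g_cont]) auto
  fix e :: real assume e: "e > 0"
  have "((\<lambda>x. C / (1 - s) * x powr (1 - s)) \<longlongrightarrow> 0) (at_right 0)"
    using s by real_asymp
  from order_tendstoD(2)[OF this e]
  obtain d' where d': "d' > 0" "\<And>x. 0 < x \<Longrightarrow> x < d' \<Longrightarrow> C / (1 - s) * x powr (1 - s) < e"
    by (auto simp: eventually_at_right_field)
  show "\<exists>d>0. \<forall>a a'. 0 < a \<longrightarrow> a \<le> a' \<longrightarrow> a' < d \<longrightarrow> \<bar>integral {a..a'} (\<lambda>t. h t * g t)\<bar> < e"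
  proof (intro exI[of _ "min d d'"] conjI allI impI)
    fix a a' :: real assume a: "0 < a" "a \<le> a'" "a' < min d d'"
    have "\<bar>integral {a..a'} (\<lambda>t. h t * g t)\<bar> \<le> C * (a' powr (1 - s) / (1 - s))"
    proof (rule abs_integral_le_powr_bound[OF a(1,2) s])
      show "continuous_on {a..a'} (\<lambda>t. h t * g t)"
        using a by (intro continuous_intros continuous_on_subset[OF h_cont]
            continuous_on_subset[OF g_cont]) auto
      fix t assume t: "a \<le> t" "t \<le> a'"
      have "\<bar>h t * g t\<bar> \<le> h t"
        using g_bounded[of t] h_nonneg[of t] a t by (simp add: abs_mult mult_left_le)
      also have "\<dots> \<le> C * t powr - s"
        using h_le[of t] a t by simp
      finally show "\<bar>h t * g t\<bar> \<le> C * t powr - s" .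
    qed
    also have "\<dots> < e"
      using d'(2)[of a'] a by simp
    finally show "\<bar>integral {a..a'} (\<lambda>t. h t * g t)\<bar> < e" .
  qed (use d d' in auto)
next
  fix e :: real assume e: "e > 0"
  have M: "M \<ge> 0"
    using g_integral[of 0 0] by simp
  have "eventually (\<lambda>x. h x < e / (2 * M + 1)) at_top"
    using e M by (intro order_tendstoD(2)[OF h_tendsto]) auto
  then obtain B where B: "\<And>x. x \<ge> B \<Longrightarrow> h x < e / (2 * M + 1)"
    by (auto simp: eventually_at_top_linorder)
  show "\<exists>B. \<forall>b b'. B \<le> b \<longrightarrow> b \<le> b' \<longrightarrow> \<bar>integral {b..b'} (\<lambda>t. h t * g t)\<bar> < e"
  proof (intro exI[of _ "max B 1"] allI impI)
    fix b b' :: real assume b: "max B 1 \<le> b" "b \<le> b'"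
    have "\<bar>integral {b..b'} (\<lambda>t. h t * g t)\<bar> \<le> 2 * h b * M"
      using b h_antimono h_nonneg g_integral
      by (intro abs_integral_antimono_mult_le integrable_continuous_real continuous_on_subset[OF g_cont]) auto
    also have "\<dots> \<le> 2 * (e / (2 * M + 1)) * M"
      using B[of b] b M by (intro mult_left_mono mult_right_mono) auto
    also have "\<dots> < e"
      using e M by (simp add: field_simps)
    finally show "\<bar>integral {b..b'} (\<lambda>t. h t * g t)\<bar> < e" .
  qed
qed

section \<open>Positivity of the limit constants\<close>

lemma tendsto_powr_mult_bounded_at_top:
  fixes g :: "real \<Rightarrow> real"
  assumes "p < 0" and "\<And>u. \<bar>g u\<bar> \<le> B"
  shows "((\<lambda>u. u powr p * g u) \<longlongrightarrow> 0) at_top"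
proof (rule Lim_null_comparison)
  show "eventually (\<lambda>u. norm (u powr p * g u) \<le> B * u powr p) at_top"
    using mult_left_mono[OF assms(2) powr_ge_zero] by (simp add: abs_mult mult.commute)
  show "((\<lambda>u. B * u powr p) \<longlongrightarrow> 0) at_top"
    using assms(1) by (intro tendsto_mult_right_zero tendsto_neg_powr filterlim_ident)
qed

lemma has_improper_integral_powr_neg_mult:
  fixes g :: "real \<Rightarrow> real"
  assumes \<sigma>: "0 < \<sigma>" "\<sigma> < 1"
    and g: "continuous_on UNIV g" "\<And>x. \<bar>g x\<bar> \<le> 1" "\<And>c d. c \<le> d \<Longrightarrow> \<bar>integral {c..d} g\<bar> \<le> M"
  shows "has_improper_integral_0_inf (\<lambda>u. u powr - \<sigma> * g u) (improper_integral_0_inf (\<lambda>u. u powr - \<sigma> * g u))"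
proof (rule has_improper_integral_0_inf_antimono_mult[OF g, where s=\<sigma> and d=1 and C=1])
  show "continuous_on {0<..} (\<lambda>u. u powr - \<sigma>)"
    by (intro continuous_intros) auto
  show "y powr - \<sigma> \<le> x powr - \<sigma>" if "0 < x" "x \<le> y" for x y
    using that \<sigma> by (intro powr_mono2') auto
  show "((\<lambda>u. u powr - \<sigma>) \<longlongrightarrow> 0) at_top"
    using \<sigma> by (intro tendsto_neg_powr filterlim_ident) auto
qed (use \<sigma> in auto)

lemma tendsto_powr_mult_one_minus_cos_at_0:
  fixes p :: real
  assumes "p > - 2"
  shows "((\<lambda>u. u powr p * (1 - cos u)) \<longlongrightarrow> 0) (at_right 0)"
proof -
  have "((\<lambda>u. 2 * (u powr p * sin (u / 2) ^ 2)) \<longlongrightarrow> 0) (at_right 0)"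
    using assms by real_asymp
  then show ?thesis
    by (simp add: cos_double_sin[of "u / 2" for u, simplified] algebra_simps)
qed

lemma tendsto_powr_mult_sin_at_0:
  fixes p :: real
  assumes "p > - 1"
  shows "((\<lambda>u. u powr p * sin u) \<longlongrightarrow> 0) (at_right 0)"
  using assms by real_asymp

lemma has_improper_integral_0_inf_pos_by_parts:
  fixes F \<psi> :: "real \<Rightarrow> real"
  assumes F: "has_improper_integral_0_inf F K"
    and parts: "\<And>a b. 0 < a \<Longrightarrow> a \<le> b \<Longrightarrow>
      integral {a..b} F = \<psi> b - \<psi> a + \<kappa> * integral {a..b} (\<lambda>u. u powr q * (1 - cos u))"
    and \<psi>: "(\<psi> \<longlongrightarrow> 0) (at_right 0)" "(\<psi> \<longlongrightarrow> 0) at_top"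
    and \<kappa>: "\<kappa> > 0" and q: "q \<le> 0"
  shows "K > 0"
proof -
  have int: "(\<lambda>u. u powr q * (1 - cos u)) integrable_on {a..b}" if "0 < a" for a b
    using that by (intro integrable_continuous_real continuous_intros) auto
  have "pi / 2 * pi powr q = integral {pi / 2..pi} (\<lambda>u. pi powr q)"
    by simp
  also have "\<dots> \<le> integral {pi / 2..pi} (\<lambda>u. u powr q * (1 - cos u))"
  proof (rule integral_le)
    fix u assume u: "u \<in> {pi / 2..pi}"
    have "cos (u - pi) \<ge> 0"
      using u by (intro cos_ge_zero) auto
    then have "1 \<le> 1 - cos u"
      by simp
    moreover have "pi powr q \<le> u powr q"
      using u q pi_gt3 by (intro powr_mono2') auto
    ultimately show "pi powr q \<le> u powr q * (1 - cos u)"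
      using mult_mono[of "pi powr q" "u powr q" 1 "1 - cos u"] by simp
  qed (use int pi_gt3 in auto)
  finally have low: "pi / 2 * pi powr q \<le> integral {pi / 2..pi} (\<lambda>u. u powr q * (1 - cos u))" .
  have ev: "eventually (\<lambda>p. \<psi> (snd p) - \<psi> (fst p) + \<kappa> * (pi / 2 * pi powr q) \<le> integral {fst p..snd p} F)
      (at_right 0 \<times>\<^sub>F at_top)"
  proof (rule eventually_at_right_0_prod_at_topI[where d=1 and B=4])
    fix a b :: real assume ab: "0 < a" "a < 1" "4 < b"
    have "integral {pi / 2..pi} (\<lambda>u. u powr q * (1 - cos u)) \<le> integral {a..b} (\<lambda>u. u powr q * (1 - cos u))"
      using ab pi_gt3 pi_less_4 by (intro integral_subset_le int) auto
    then show "\<psi> (snd (a, b)) - \<psi> (fst (a, b)) + \<kappa> * (pi / 2 * pi powr q) \<le> integral {fst (a, b)..snd (a, b)} F"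
      using parts[of a b] ab low \<kappa> by (simp add: mult_left_mono)
  qed simp
  have "((\<lambda>p. \<psi> (snd p) - \<psi> (fst p) + \<kappa> * (pi / 2 * pi powr q)) \<longlongrightarrow> 0 - 0 + \<kappa> * (pi / 2 * pi powr q))
      (at_right 0 \<times>\<^sub>F at_top)"
    by (intro tendsto_intros filterlim_compose[OF \<psi>(2) filterlim_snd] filterlim_compose[OF \<psi>(1) filterlim_fst])
  from tendsto_le[OF at_right_0_prod_at_top_neq_bot F[unfolded has_improper_integral_0_inf_def] this ev]
  have "\<kappa> * (pi / 2 * pi powr q) \<le> K"
    by simp
  moreover have "\<kappa> * (pi / 2 * pi powr q) > 0"
    using \<kappa> by simp
  ultimately show ?thesis
    by linarith
qed

lemma integral_eq_has_integral_diff: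
  fixes F R :: "real \<Rightarrow> real"
  assumes "((\<lambda>u. F u - \<kappa> * R u) has_integral D) S" "F integrable_on S" "R integrable_on S"
  shows "integral S F = D + \<kappa> * integral S R"
proof -
  have "integral S (\<lambda>u. F u - \<kappa> * R u) = integral S F - \<kappa> * integral S R"
    using assms(2,3) by (simp add: integral_diff integrable_on_mult_right)
  with integral_unique[OF assms(1)] show ?thesis
    by simp
qed

lemma improper_integral_powr_sin_pos:
  fixes \<sigma> :: real
  assumes \<sigma>: "0 < \<sigma>" "\<sigma> < 1"
  shows "improper_integral_0_inf (\<lambda>u. u powr - \<sigma> * sin u) > 0"
proof (rule has_improper_integral_0_inf_pos_by_parts[where \<psi>="\<lambda>u. u powr - \<sigma> * (1 - cos u)"
      and \<kappa>=\<sigma> and q="- \<sigma> - 1"])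
  show "has_improper_integral_0_inf (\<lambda>u. u powr - \<sigma> * sin u) (improper_integral_0_inf (\<lambda>u. u powr - \<sigma> * sin u))"
    by (rule has_improper_integral_powr_neg_mult[OF \<sigma> _ _ abs_integral_sin_le]) (auto intro: continuous_intros)
  fix a b :: real assume ab: "0 < a" "a \<le> b"
  have "((\<lambda>u. u powr - \<sigma> * sin u - \<sigma> * (u powr (- \<sigma> - 1) * (1 - cos u))) has_integral
      b powr - \<sigma> * (1 - cos b) - a powr - \<sigma> * (1 - cos a)) {a..b}"
  proof (rule fundamental_theorem_of_calculus_real[OF ab(2)])
    fix u assume "u \<in> {a..b}"
    then have u: "u > 0"
      using ab by auto
    have "((\<lambda>u. u powr - \<sigma> * (1 - cos u)) has_real_derivative
        - \<sigma> * u powr (- \<sigma> - 1) * (1 - cos u) + sin u * u powr - \<sigma>) (at u)"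
      by (intro DERIV_mult has_real_derivative_powr[OF u]) (auto intro!: derivative_eq_intros)
    then show "((\<lambda>u. u powr - \<sigma> * (1 - cos u)) has_real_derivative
        u powr - \<sigma> * sin u - \<sigma> * (u powr (- \<sigma> - 1) * (1 - cos u))) (at u)"
      by (rule DERIV_cong) (simp add: algebra_simps)
  qed
  then show "integral {a..b} (\<lambda>u. u powr - \<sigma> * sin u) =
      b powr - \<sigma> * (1 - cos b) - a powr - \<sigma> * (1 - cos a) +
      \<sigma> * integral {a..b} (\<lambda>u. u powr (- \<sigma> - 1) * (1 - cos u))"
    using ab by (intro integral_eq_has_integral_diff integrable_continuous_real continuous_intros) auto
next
  show "((\<lambda>u. u powr - \<sigma> * (1 - cos u)) \<longlongrightarrow> 0) (at_right 0)"
    using \<sigma> by (intro tendsto_powr_mult_one_minus_cos_at_0) auto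
  show "((\<lambda>u. u powr - \<sigma> * (1 - cos u)) \<longlongrightarrow> 0) at_top"
    using \<sigma> by (intro tendsto_powr_mult_bounded_at_top[where B=2]) (auto simp: abs_le_iff)
qed (use \<sigma> in auto)

lemma improper_integral_powr_cos_pos:
  fixes \<sigma> :: real
  assumes \<sigma>: "0 < \<sigma>" "\<sigma> < 1"
  shows "improper_integral_0_inf (\<lambda>u. u powr - \<sigma> * cos u) > 0"
proof (rule has_improper_integral_0_inf_pos_by_parts[where
      \<psi>="\<lambda>u. u powr - \<sigma> * sin u + \<sigma> * (u powr (- \<sigma> - 1) * (1 - cos u))"
      and \<kappa>="\<sigma> * (\<sigma> + 1)" and q="- \<sigma> - 2"])
  show "has_improper_integral_0_inf (\<lambda>u. u powr - \<sigma> * cos u) (improper_integral_0_inf (\<lambda>u. u powr - \<sigma> * cos u))"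
    by (rule has_improper_integral_powr_neg_mult[OF \<sigma> _ _ abs_integral_cos_le]) (auto intro: continuous_intros)
  fix a b :: real assume ab: "0 < a" "a \<le> b"
  let ?\<psi> = "\<lambda>u. u powr - \<sigma> * sin u + \<sigma> * (u powr (- \<sigma> - 1) * (1 - cos u))"
  have "((\<lambda>u. u powr - \<sigma> * cos u - \<sigma> * (\<sigma> + 1) * (u powr (- \<sigma> - 2) * (1 - cos u))) has_integral
      ?\<psi> b - ?\<psi> a) {a..b}"
  proof (rule fundamental_theorem_of_calculus_real[OF ab(2)])
    fix u assume "u \<in> {a..b}"
    then have u: "u > 0"
      using ab by auto
    have "((\<lambda>u. u powr (- \<sigma> - 1)) has_real_derivative (- \<sigma> - 1) * u powr (- \<sigma> - 2)) (at u)"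
      using has_real_derivative_powr[OF u, of "- \<sigma> - 1"] by (simp add: diff_diff_eq)
    moreover have "((\<lambda>u. 1 - cos u) has_real_derivative sin u) (at u)"
      by (auto intro!: derivative_eq_intros)
    ultimately have "(?\<psi> has_real_derivative
        (- \<sigma> * u powr (- \<sigma> - 1) * sin u + cos u * u powr - \<sigma>) +
        \<sigma> * ((- \<sigma> - 1) * u powr (- \<sigma> - 2) * (1 - cos u) + sin u * u powr (- \<sigma> - 1))) (at u)"
      by (intro DERIV_add DERIV_cmult DERIV_mult has_real_derivative_powr[OF u] DERIV_sin)
    then show "(?\<psi> has_real_derivative
        u powr - \<sigma> * cos u - \<sigma> * (\<sigma> + 1) * (u powr (- \<sigma> - 2) * (1 - cos u))) (at u)"
      by (rule DERIV_cong) (simp add: algebra_simps)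
  qed
  then show "integral {a..b} (\<lambda>u. u powr - \<sigma> * cos u) = ?\<psi> b - ?\<psi> a +
      \<sigma> * (\<sigma> + 1) * integral {a..b} (\<lambda>u. u powr (- \<sigma> - 2) * (1 - cos u))"
    using ab by (intro integral_eq_has_integral_diff integrable_continuous_real continuous_intros) auto
next
  have "((\<lambda>u. u powr - \<sigma> * sin u) \<longlongrightarrow> 0) (at_right 0)"
    "((\<lambda>u. u powr (- \<sigma> - 1) * (1 - cos u)) \<longlongrightarrow> 0) (at_right 0)"
    using \<sigma> by (intro tendsto_powr_mult_sin_at_0 tendsto_powr_mult_one_minus_cos_at_0; simp)+
  from tendsto_add[OF this(1) tendsto_mult_right_zero[OF this(2)]]
  show "((\<lambda>u. u powr - \<sigma> * sin u + \<sigma> * (u powr (- \<sigma> - 1) * (1 - cos u))) \<longlongrightarrow> 0) (at_right 0)"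
    by simp
  have "((\<lambda>u. u powr - \<sigma> * sin u) \<longlongrightarrow> 0) at_top"
    using \<sigma> by (intro tendsto_powr_mult_bounded_at_top[where B=1]) auto
  moreover have "((\<lambda>u. u powr (- \<sigma> - 1) * (1 - cos u)) \<longlongrightarrow> 0) at_top"
    using \<sigma> by (intro tendsto_powr_mult_bounded_at_top[where B=2]) (auto simp: abs_le_iff)
  ultimately show "((\<lambda>u. u powr - \<sigma> * sin u + \<sigma> * (u powr (- \<sigma> - 1) * (1 - cos u))) \<longlongrightarrow> 0) at_top"
    using tendsto_add[OF _ tendsto_mult_right_zero] by fastforce
qed (use \<sigma> in auto)

section \<open>Convex functions vanishing at infinity\<close>

locale convex_decay =
  fixes f f' :: "real \<Rightarrow> real"
  assumes tendsto_at_top: "(f \<longlongrightarrow> 0) at_top"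
    and has_deriv: "\<And>t. t > 0 \<Longrightarrow> (f has_real_derivative f' t) (at t)"
    and convex: "convex_on {0<..} f"
begin

lemma above_tangent: "0 < x \<Longrightarrow> 0 < y \<Longrightarrow> f' x * (y - x) \<le> f y - f x"
  using convex_on_imp_above_tangent[OF convex, of x y "f' x"] has_deriv[of x]
  by (auto simp: interior_open intro: has_field_derivative_at_within)

lemma deriv_mono: "0 < x \<Longrightarrow> x \<le> y \<Longrightarrow> f' x \<le> f' y"
  using above_tangent[of x y] above_tangent[of y x]
  by (cases "x = y") (auto simp: algebra_simps intro: mult_right_le_imp_le[of _ "y - x"])

lemma deriv_nonpos:
  assumes "0 < x"
  shows "f' x \<le> 0"
proof (rule ccontr)
  assume "\<not> f' x \<le> 0"
  then have "filterlim (\<lambda>y. f' x * (y - x) + f x) at_top at_top"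
    by real_asymp
  moreover have "eventually (\<lambda>y. f' x * (y - x) + f x \<le> f y) at_top"
    using eventually_gt_at_top[of 0] by eventually_elim (use above_tangent assms in force)
  ultimately have "filterlim f at_top at_top"
    by (rule filterlim_at_top_mono)
  then show False
    using not_tendsto_and_filterlim_at_infinity[OF _ tendsto_at_top filterlim_at_top_imp_at_infinity]
    by simp
qed

lemma antimono: "0 < x \<Longrightarrow> x \<le> y \<Longrightarrow> f y \<le> f x"
  using above_tangent[of y x] deriv_nonpos[of y] by (smt (verit) mult_nonpos_nonpos)

lemma nonneg:
  assumes "0 < x"
  shows "0 \<le> f x"
proof (rule tendsto_upperbound[OF tendsto_at_top])
  show "eventually (\<lambda>y. f y \<le> f x) at_top"
    using eventually_ge_at_top[of x] by eventually_elim (use assms antimono in auto)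
qed simp

lemma continuous: "continuous_on {0<..} f"
  using has_deriv by (intro continuous_at_imp_continuous_on) (auto intro: DERIV_isCont)

lemma le_limit_at_0:
  assumes "(f \<longlongrightarrow> L) (at_right 0)" "0 < x"
  shows "f x \<le> L"
proof (rule tendsto_lowerbound[OF assms(1)])
  show "eventually (\<lambda>t. f x \<le> f t) (at_right 0)"
    using assms(2) antimono by (auto simp: eventually_at_right_field intro!: exI[of _ x])
qed (simp add: trivial_limit_at_right_real)

lemma has_improper_integral_mult_rescaled:
  assumes k: "continuous_on UNIV k" "\<And>x. \<bar>k x\<bar> \<le> 1" "\<And>c d. c \<le> d \<Longrightarrow> \<bar>integral {c..d} k\<bar> \<le> 2"
    and w: "w > 0"
    and f_le: "0 \<le> s" "s < 1" "d > 0" "\<And>t. 0 < t \<Longrightarrow> t < d \<Longrightarrow> f t \<le> C * t powr - s"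
  shows "has_improper_integral_0_inf (\<lambda>t. f t * k (t * w)) (improper_integral_0_inf (\<lambda>t. f t * k (t * w)))"
proof (rule has_improper_integral_0_inf_antimono_mult[OF _ _ _ continuous antimono nonneg tendsto_at_top f_le])
  show "continuous_on UNIV (\<lambda>t. k (t * w))"
    by (intro continuous_on_compose2[OF k(1)] continuous_intros) auto
  show "\<bar>integral {c..d} (\<lambda>t. k (t * w))\<bar> \<le> 2 / w" if "c \<le> d" for c d
    using abs_integral_rescale_le[OF k(3) w that] .
qed (use k(2) in auto)

lemma integral_by_parts_rescaled:
  assumes f'_cont: "continuous_on {0<..} f'" and ab: "0 < a" "a \<le> b" and w: "w > 0"
    and K: "\<And>x. (K has_real_derivative k x) (at x)" and k: "continuous_on UNIV k"
  shows "w * integral {a..b} (\<lambda>t. f t * k (t * w)) =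
    f b * K (b * w) - f a * K (a * w) - integral {a..b} (\<lambda>t. f' t * K (t * w))"
proof -
  have K_cont: "continuous_on UNIV K"
    using K by (intro continuous_at_imp_continuous_on) (auto intro: DERIV_isCont)
  have "integral {a..b} (\<lambda>t. f t * (k (t * w) * w)) =
      f b * K (b * w) - f a * K (a * w) - integral {a..b} (\<lambda>t. f' t * K (t * w))"
  proof (rule integral_by_parts_real[OF ab(2)])
    show "(f has_real_derivative f' x) (at x)" if "x \<in> {a..b}" for x
      using that ab by (intro has_deriv) auto
    show "((\<lambda>t. K (t * w)) has_real_derivative k (x * w) * w) (at x)" for x
      by (rule DERIV_chain2[OF K]) (auto intro!: derivative_eq_intros)
    show "continuous_on {a..b} (\<lambda>t. f' t * K (t * w))"
      using ab by (intro continuous_intros continuous_on_subset[OF f'_cont]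
          continuous_on_compose2[OF K_cont]) auto
    show "continuous_on {a..b} (\<lambda>t. f t * (k (t * w) * w))"
      using ab by (intro continuous_intros continuous_on_subset[OF continuous]
          continuous_on_compose2[OF k]) auto
  qed
  moreover have "integral {a..b} (\<lambda>t. f t * (k (t * w) * w)) = w * integral {a..b} (\<lambda>t. f t * k (t * w))"
    by (simp add: mult.commute mult.left_commute flip: integral_mult_right)
  ultimately show ?thesis
    by simp
qed

lemma abs_integral_deriv_mult_le:
  assumes f'_cont: "continuous_on {0<..} f'" and "0 < m" "m \<le> b"
    and k: "continuous_on UNIV k" "\<And>c d. c \<le> d \<Longrightarrow> \<bar>integral {c..d} k\<bar> \<le> M"
  shows "\<bar>integral {m..b} (\<lambda>t. f' t * k t)\<bar> \<le> 2 * - f' m * M"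
proof -
  have "\<bar>integral {m..b} (\<lambda>t. - f' t * k t)\<bar> \<le> 2 * - f' m * M"
    using assms deriv_mono deriv_nonpos[of b]
    by (intro abs_integral_antimono_mult_le integrable_continuous_real continuous_on_subset[OF k(1)])
      auto
  then show ?thesis
    by simp
qed

lemma abs_integral_deriv_mult_sin_le:
  assumes f'_cont: "continuous_on {0<..} f'" and \<sigma>: "0 \<le> \<sigma>" "\<sigma> < 1" and w: "w > 0"
    and f'_le: "\<And>t. 0 < t \<Longrightarrow> t \<le> 1 / w \<Longrightarrow> - f' t \<le> \<epsilon> * t powr - \<sigma>"
    and ab: "0 < a" "a \<le> 1 / w" "1 / w \<le> b"
  shows "\<bar>integral {a..b} (\<lambda>t. f' t * sin (t * w))\<bar> \<le> (1 / (1 - \<sigma>) + 4) * \<epsilon> * w powr (\<sigma> - 1)"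
proof -
  define m where "m = 1 / w"
  have m: "0 < m"
    using w by (simp add: m_def)
  have "integral {a..b} (\<lambda>t. f' t * sin (t * w)) =
      integral {a..m} (\<lambda>t. f' t * sin (t * w)) + integral {m..b} (\<lambda>t. f' t * sin (t * w))"
    using ab by (intro Henstock_Kurzweil_Integration.integral_combine[symmetric]
        integrable_continuous_real continuous_intros continuous_on_subset[OF f'_cont]) (auto simp: m_def)
  moreover have "\<bar>integral {a..m} (\<lambda>t. f' t * sin (t * w))\<bar> \<le> \<epsilon> * (m powr (1 - \<sigma>) / (1 - \<sigma>))"
  proof (rule abs_integral_le_powr_bound[OF ab(1) _ \<sigma>])
    show "continuous_on {a..m} (\<lambda>t. f' t * sin (t * w))"
      using ab by (intro continuous_intros continuous_on_subset[OF f'_cont]) auto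
    fix t assume t: "a \<le> t" "t \<le> m"
    have "\<bar>f' t * sin (t * w)\<bar> \<le> \<bar>f' t\<bar>"
      by (simp add: abs_mult mult_left_le)
    also have "\<dots> = - f' t"
      using deriv_nonpos[of t] ab t by simp
    also have "\<dots> \<le> \<epsilon> * t powr - \<sigma>"
      using f'_le[of t] ab t by (simp add: m_def)
    finally show "\<bar>f' t * sin (t * w)\<bar> \<le> \<epsilon> * t powr - \<sigma>" .
  qed (use ab in \<open>simp add: m_def\<close>)
  moreover have "\<bar>integral {m..b} (\<lambda>t. f' t * sin (t * w))\<bar> \<le> 2 * - f' m * (2 / w)"
  proof (rule abs_integral_deriv_mult_le[OF f'_cont m])
    show "continuous_on UNIV (\<lambda>t. sin (t * w))"
      by (intro continuous_intros)
    show "\<bar>integral {c..d} (\<lambda>t. sin (t * w))\<bar> \<le> 2 / w" if "c \<le> d" for c d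
      using abs_integral_rescale_le[OF abs_integral_sin_le w that] .
  qed (use ab in \<open>simp add: m_def\<close>)
  moreover have "2 * - f' m * (2 / w) \<le> 4 * \<epsilon> * (m powr - \<sigma> / w)"
    using divide_right_mono[of "4 * - f' m" "4 * (\<epsilon> * m powr - \<sigma>)" w] f'_le[OF m] w
    by (simp add: m_def)
  moreover have "m powr (1 - \<sigma>) = w powr (\<sigma> - 1)" "m powr - \<sigma> / w = w powr (\<sigma> - 1)"
    using w by (simp_all add: m_def powr_divide powr_minus powr_diff)
  then have "\<epsilon> * (m powr (1 - \<sigma>) / (1 - \<sigma>)) + 4 * \<epsilon> * (m powr - \<sigma> / w) =
      (1 / (1 - \<sigma>) + 4) * \<epsilon> * w powr (\<sigma> - 1)"
    by (simp add: algebra_simps)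
  ultimately show ?thesis
    by linarith
qed

lemma Fcos_bound:
  assumes f'_cont: "continuous_on {0<..} f'" and f_0: "(f \<longlongrightarrow> f 0) (at_right 0)"
    and \<sigma>: "0 \<le> \<sigma>" "\<sigma> < 1" and w: "w > 0"
    and f'_le: "\<And>t. 0 < t \<Longrightarrow> t \<le> 1 / w \<Longrightarrow> - f' t \<le> \<epsilon> * t powr - \<sigma>"
  shows "w powr (2 - \<sigma>) * \<bar>Fcos f w\<bar> \<le> (1 / (1 - \<sigma>) + 4) * \<epsilon>"
proof -
  have "has_improper_integral_0_inf (\<lambda>t. f t * cos (t * w)) (Fcos f w)"
    unfolding Fcos_def
    using le_limit_at_0[OF f_0]
    by (intro has_improper_integral_mult_rescaled[OF _ _ abs_integral_cos_le w, of 0 1 "f 0"])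
      (auto intro: continuous_intros)
  then have F: "has_improper_integral_0_inf (\<lambda>t. w * (f t * cos (t * w))) (w * Fcos f w)"
    by (rule has_improper_integral_0_inf_cmult)
  have "1 / w > 0"
    using w by simp
  then have "\<bar>w * Fcos f w - 0\<bar> \<le> (1 / (1 - \<sigma>) + 4) * \<epsilon> * w powr (\<sigma> - 1)"
  proof (rule has_improper_integral_0_inf_bound[OF F])
    have "((\<lambda>a. \<bar>f a * sin (a * w)\<bar>) \<longlongrightarrow> \<bar>f 0 * sin (0 * w)\<bar>) (at_right 0)"
      by (intro tendsto_intros f_0)
    then show "((\<lambda>a. \<bar>f a * sin (a * w)\<bar>) \<longlongrightarrow> 0) (at_right 0)"
      by simp
    show "((\<lambda>b. \<bar>f b\<bar>) \<longlongrightarrow> 0) at_top"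
      using tendsto_rabs[OF tendsto_at_top] by simp
    fix a b assume ab: "0 < a" "a < 1 / w" "1 / w < b"
    have "w * integral {a..b} (\<lambda>t. f t * cos (t * w)) =
        f b * sin (b * w) - f a * sin (a * w) - integral {a..b} (\<lambda>t. f' t * sin (t * w))"
      using ab w by (intro integral_by_parts_rescaled f'_cont DERIV_sin continuous_intros) auto
    moreover have "\<bar>integral {a..b} (\<lambda>t. f' t * sin (t * w))\<bar> \<le> (1 / (1 - \<sigma>) + 4) * \<epsilon> * w powr (\<sigma> - 1)"
      using ab by (intro abs_integral_deriv_mult_sin_le f'_cont \<sigma> w f'_le) auto
    moreover have "\<bar>f b * sin (b * w)\<bar> \<le> \<bar>f b\<bar>"
      by (simp add: abs_mult mult_left_le)
    ultimately show "\<bar>integral {a..b} (\<lambda>t. w * (f t * cos (t * w))) - 0\<bar> \<le>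
        \<bar>f a * sin (a * w)\<bar> + \<bar>f b\<bar> + (1 / (1 - \<sigma>) + 4) * \<epsilon> * w powr (\<sigma> - 1)"
      by simp
  qed
  note bound = this
  have "w powr (2 - \<sigma>) * \<bar>Fcos f w\<bar> = w powr (1 - \<sigma>) * \<bar>w * Fcos f w - 0\<bar>"
    using w powr_add[of w "1 - \<sigma>" 1] by (simp add: abs_mult)
  also have "\<dots> \<le> w powr (1 - \<sigma>) * ((1 / (1 - \<sigma>) + 4) * \<epsilon> * w powr (\<sigma> - 1))"
    using bound by (rule mult_left_mono) simp
  also have "\<dots> = (w powr (1 - \<sigma>) * w powr (\<sigma> - 1)) * ((1 / (1 - \<sigma>) + 4) * \<epsilon>)"
    by (simp only: ac_simps)
  also have "\<dots> = (1 / (1 - \<sigma>) + 4) * \<epsilon>"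
    using w by (simp flip: powr_add)
  finally show ?thesis .
qed

lemma Fsin_bound:
  assumes f'_cont: "continuous_on {0<..} f'" and f_0: "(f \<longlongrightarrow> f 0) (at_right 0)"
    and w: "w > 0" and \<delta>: "\<delta> > 0"
  shows "\<bar>w * Fsin f w - f 0\<bar> \<le> f 0 - f \<delta> + 4 * - f' \<delta> / w"
proof -
  have "has_improper_integral_0_inf (\<lambda>t. f t * sin (t * w)) (Fsin f w)"
    unfolding Fsin_def
    using le_limit_at_0[OF f_0]
    by (intro has_improper_integral_mult_rescaled[OF _ _ abs_integral_sin_le w, of 0 1 "f 0"])
      (auto intro: continuous_intros)
  then have F: "has_improper_integral_0_inf (\<lambda>t. w * (f t * sin (t * w))) (w * Fsin f w)"
    by (rule has_improper_integral_0_inf_cmult)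
  show ?thesis
  proof (rule has_improper_integral_0_inf_bound[OF F \<delta>])
    have "((\<lambda>a. \<bar>f a * cos (a * w) - f 0\<bar> + (f a - f 0)) \<longlongrightarrow>
        \<bar>f 0 * cos (0 * w) - f 0\<bar> + (f 0 - f 0)) (at_right 0)"
      by (intro tendsto_intros f_0)
    then show "((\<lambda>a. \<bar>f a * cos (a * w) - f 0\<bar> + (f a - f 0)) \<longlongrightarrow> 0) (at_right 0)"
      by simp
    show "((\<lambda>b. \<bar>f b\<bar>) \<longlongrightarrow> 0) at_top"
      using tendsto_rabs[OF tendsto_at_top] by simp
    fix a b assume ab: "0 < a" "a < \<delta>" "\<delta> < b"
    have cos_int: "(\<lambda>t. f' t * cos (t * w)) integrable_on {c..d}" if "0 < c" for c d
      using that by (intro integrable_continuous_real continuous_intros continuous_on_subset[OF f'_cont]) auto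
    have "w * integral {a..b} (\<lambda>t. f t * sin (t * w)) =
        f b * - cos (b * w) - f a * - cos (a * w) - integral {a..b} (\<lambda>t. f' t * - cos (t * w))"
      using ab w by (intro integral_by_parts_rescaled f'_cont continuous_intros)
        (auto intro!: derivative_eq_intros)
    then have ibp: "w * integral {a..b} (\<lambda>t. f t * sin (t * w)) =
        f a * cos (a * w) - f b * cos (b * w) + integral {a..b} (\<lambda>t. f' t * cos (t * w))"
      by (simp flip: integral_neg)
    have split: "integral {a..b} (\<lambda>t. f' t * cos (t * w)) =
        integral {a..\<delta>} (\<lambda>t. f' t * cos (t * w)) + integral {\<delta>..b} (\<lambda>t. f' t * cos (t * w))"
      using ab by (intro Henstock_Kurzweil_Integration.integral_combine[symmetric] cos_int) auto
    have FTC: "((\<lambda>t. - f' t) has_integral - f \<delta> - - f a) {a..\<delta>}"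
      using ab by (intro fundamental_theorem_of_calculus_real) (auto intro!: derivative_eq_intros has_deriv)
    have "norm (f' t * cos (t * w)) \<le> - f' t" if "t \<in> {a..\<delta>}" for t
    proof -
      have "norm (f' t * cos (t * w)) \<le> \<bar>f' t\<bar>"
        by (simp add: abs_mult mult_left_le)
      also have "\<dots> = - f' t"
        using deriv_nonpos[of t] ab that by simp
      finally show ?thesis .
    qed
    from Henstock_Kurzweil_Integration.integral_norm_bound_integral[OF cos_int[OF ab(1)]
        has_integral_integrable[OF FTC] this]
    have near: "\<bar>integral {a..\<delta>} (\<lambda>t. f' t * cos (t * w))\<bar> \<le> f a - f \<delta>"
      using integral_unique[OF FTC] by simp
    have "\<bar>integral {\<delta>..b} (\<lambda>t. f' t * cos (t * w))\<bar> \<le> 2 * - f' \<delta> * (2 / w)"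
    proof (rule abs_integral_deriv_mult_le[OF f'_cont \<delta>])
      show "continuous_on UNIV (\<lambda>t. cos (t * w))"
        by (intro continuous_intros)
      show "\<bar>integral {c..d} (\<lambda>t. cos (t * w))\<bar> \<le> 2 / w" if "c \<le> d" for c d
        using abs_integral_rescale_le[OF abs_integral_cos_le w that] .
    qed (use ab in simp)
    then have tail: "\<bar>integral {\<delta>..b} (\<lambda>t. f' t * cos (t * w))\<bar> \<le> 4 * - f' \<delta> / w"
      by simp
    have "integral {a..b} (\<lambda>t. w * (f t * sin (t * w))) = w * integral {a..b} (\<lambda>t. f t * sin (t * w))"
      by simp
    moreover have "\<bar>f b * cos (b * w)\<bar> \<le> \<bar>f b\<bar>"
      by (simp add: abs_mult mult_left_le)
    ultimately show "\<bar>integral {a..b} (\<lambda>t. w * (f t * sin (t * w))) - f 0\<bar> \<le>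
        \<bar>f a * cos (a * w) - f 0\<bar> + (f a - f 0) + \<bar>f b\<bar> + (f 0 - f \<delta> + 4 * - f' \<delta> / w)"
      using ibp split near tail by (smt (verit))
  qed
qed

lemma Fcos_decay:
  assumes f'_cont: "continuous_on {0<..} f'" and f_0: "(f \<longlongrightarrow> f 0) (at_right 0)"
    and \<sigma>: "0 \<le> \<sigma>" "\<sigma> < 1" and f'_growth: "((\<lambda>t. t powr \<sigma> * f' t) \<longlongrightarrow> 0) (at_right 0)"
  shows "((\<lambda>\<omega>. \<omega> powr (2 - \<sigma>) * Fcos f \<omega>) \<longlongrightarrow> 0) at_top"
  unfolding tendsto_iff
proof (intro allI impI)
  fix e :: real assume e: "e > 0"
  define K where "K = 1 / (1 - \<sigma>) + 4"
  have K: "K > 0"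
    using \<sigma> by (simp add: K_def add_pos_pos)
  define \<epsilon> where "\<epsilon> = e / (2 * K)"
  have "\<epsilon> > 0"
    using e K by (simp add: \<epsilon>_def)
  from tendstoD[OF f'_growth this]
  obtain \<delta> where \<delta>: "\<delta> > 0" "\<And>t. 0 < t \<Longrightarrow> t < \<delta> \<Longrightarrow> \<bar>t powr \<sigma> * f' t\<bar> < \<epsilon>"
    by (auto simp: eventually_at_right_field)
  have f'_le: "- f' t \<le> \<epsilon> * t powr - \<sigma>" if "0 < t" "t < \<delta>" for t
  proof -
    have "- f' t \<le> \<bar>t powr \<sigma> * f' t\<bar> * t powr - \<sigma>"
      using that by (simp add: abs_mult powr_minus field_simps)
    also have "\<dots> \<le> \<epsilon> * t powr - \<sigma>"
      using \<delta>(2)[OF that] by (intro mult_right_mono) auto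
    finally show ?thesis .
  qed
  show "eventually (\<lambda>\<omega>. dist (\<omega> powr (2 - \<sigma>) * Fcos f \<omega>) 0 < e) at_top"
    using eventually_gt_at_top[of "1 / \<delta>"]
  proof eventually_elim
    case (elim w)
    have w: "w > 0"
      using elim \<delta>(1) by (meson divide_pos_pos less_trans zero_less_one)
    then have "1 / w < \<delta>"
      using elim \<delta>(1) by (simp add: field_simps)
    have "w powr (2 - \<sigma>) * \<bar>Fcos f w\<bar> \<le> K * \<epsilon>"
      unfolding K_def using \<open>1 / w < \<delta>\<close> f'_le by (intro Fcos_bound f'_cont f_0 \<sigma> w) auto
    also have "\<dots> < e"
      using e K by (simp add: \<epsilon>_def)
    finally show ?case
      using w by (simp add: abs_mult)
  qed
qed

lemma Fsin_asymptotic: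
  assumes f'_cont: "continuous_on {0<..} f'" and f_0: "(f \<longlongrightarrow> f 0) (at_right 0)"
  shows "((\<lambda>\<omega>. \<omega> * Fsin f \<omega>) \<longlongrightarrow> f 0) at_top"
  unfolding tendsto_iff
proof (intro allI impI)
  fix e :: real assume e: "e > 0"
  from tendstoD[OF f_0 half_gt_zero[OF e]]
  obtain \<delta>' where \<delta>': "\<delta>' > 0" "\<And>t. 0 < t \<Longrightarrow> t < \<delta>' \<Longrightarrow> \<bar>f t - f 0\<bar> < e / 2"
    by (auto simp: eventually_at_right_field dist_real_def)
  define \<delta> where "\<delta> = \<delta>' / 2"
  have \<delta>: "\<delta> > 0" "f 0 - f \<delta> < e / 2"
    using \<delta>'(1) \<delta>'(2)[of \<delta>] unfolding \<delta>_def by linarith+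
  show "eventually (\<lambda>\<omega>. dist (\<omega> * Fsin f \<omega>) (f 0) < e) at_top"
    using eventually_gt_at_top[of "max 1 (8 * - f' \<delta> / e)"]
  proof eventually_elim
    case (elim w)
    then have w: "w > 0" "8 * - f' \<delta> / e < w"
      by auto
    have "\<bar>w * Fsin f w - f 0\<bar> \<le> f 0 - f \<delta> + 4 * - f' \<delta> / w"
      using w \<delta>(1) by (intro Fsin_bound f'_cont f_0)
    also have "\<dots> < e"
    proof -
      have "8 * - f' \<delta> < w * e"
        using w(2) unfolding pos_divide_less_eq[OF e] .
      then have "4 * - f' \<delta> / w < e / 2"
        using w(1) by (subst pos_divide_less_eq) (auto simp: mult.commute)
      then show ?thesis
        using \<delta>(2) by linarith
    qed
    finally show ?case
      by (simp add: dist_real_def)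
  qed
qed

lemma has_improper_integral_rescaled_comparison:
  fixes k :: "real \<Rightarrow> real"
  assumes k: "continuous_on UNIV k" "\<And>x. \<bar>k x\<bar> \<le> 1" "\<And>c d. c \<le> d \<Longrightarrow> \<bar>integral {c..d} k\<bar> \<le> 2"
    and K: "has_improper_integral_0_inf (\<lambda>u. u powr - \<sigma> * k u) K"
    and \<sigma>: "0 \<le> \<sigma>" "\<sigma> < 1" and w: "w > 0"
    and f_le: "d > 0" "\<And>t. 0 < t \<Longrightarrow> t < d \<Longrightarrow> f t \<le> C * t powr - \<sigma>"
  shows "has_improper_integral_0_inf (\<lambda>t. w powr (1 - \<sigma>) * ((f t - c * t powr - \<sigma>) * k (t * w)))
    (w powr (1 - \<sigma>) * improper_integral_0_inf (\<lambda>t. f t * k (t * w)) - c * K)"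
proof -
  have k_cont: "continuous_on UNIV (\<lambda>t. k (t * w))"
    by (intro continuous_on_compose2[OF k(1)] continuous_intros) auto
  have "has_improper_integral_0_inf (\<lambda>t. f t * k (t * w)) (improper_integral_0_inf (\<lambda>t. f t * k (t * w)))"
    using f_le \<sigma> by (intro has_improper_integral_mult_rescaled[OF k w])
  then have F: "has_improper_integral_0_inf (\<lambda>t. w powr (1 - \<sigma>) * (f t * k (t * w)))
      (w powr (1 - \<sigma>) * improper_integral_0_inf (\<lambda>t. f t * k (t * w)))"
    by (rule has_improper_integral_0_inf_cmult)
  have rescale_eq: "w * ((t * w) powr - \<sigma> * k (t * w)) = w powr (1 - \<sigma>) * (t powr - \<sigma> * k (t * w))"
    if "t > 0" for t
    using that w powr_add[of w 1 "- \<sigma>"] by (simp add: powr_mult)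
  have "has_improper_integral_0_inf (\<lambda>t. w * ((t * w) powr - \<sigma> * k (t * w))) (w * (K / w))"
    by (intro has_improper_integral_0_inf_cmult has_improper_integral_0_inf_rescale[OF K w])
  from has_improper_integral_0_inf_cong[OF this rescale_eq]
  have "has_improper_integral_0_inf (\<lambda>t. w powr (1 - \<sigma>) * (t powr - \<sigma> * k (t * w))) K"
    using w by simp
  then have T: "has_improper_integral_0_inf (\<lambda>t. c * (w powr (1 - \<sigma>) * (t powr - \<sigma> * k (t * w)))) (c * K)"
    by (rule has_improper_integral_0_inf_cmult)
  show ?thesis
  proof (rule has_improper_integral_0_inf_cong[OF has_improper_integral_0_inf_diff[OF F T]])
    show "(\<lambda>t. w powr (1 - \<sigma>) * (f t * k (t * w))) integrable_on {a..b}" if "0 < a" for a b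
      using that by (intro integrable_continuous_real continuous_intros
          continuous_on_subset[OF continuous] continuous_on_subset[OF k_cont]) auto
    show "(\<lambda>t. c * (w powr (1 - \<sigma>) * (t powr - \<sigma> * k (t * w)))) integrable_on {a..b}" if "0 < a" for a b
      using that by (intro integrable_continuous_real continuous_intros
          continuous_on_subset[OF k_cont]) auto
  qed (simp add: algebra_simps)
qed

lemma abs_integral_comparison_le:
  fixes k :: "real \<Rightarrow> real"
  assumes k: "continuous_on UNIV k" "\<And>x. \<bar>k x\<bar> \<le> 1" "\<And>c d. c \<le> d \<Longrightarrow> \<bar>integral {c..d} k\<bar> \<le> 2"
    and \<sigma>: "0 \<le> \<sigma>" "\<sigma> < 1" and c: "0 \<le> c" and w: "w > 0"
    and f_near: "\<And>t. 0 < t \<Longrightarrow> t \<le> m \<Longrightarrow> \<bar>t powr \<sigma> * f t - c\<bar> \<le> \<epsilon>"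
    and ab: "0 < a" "a \<le> m" "m \<le> b"
  shows "\<bar>integral {a..b} (\<lambda>t. (f t - c * t powr - \<sigma>) * k (t * w))\<bar> \<le>
    \<epsilon> * (m powr (1 - \<sigma>) / (1 - \<sigma>)) + 4 * (2 * c + \<epsilon>) * (m powr - \<sigma> / w)"
proof -
  define G where "G = (\<lambda>t. (f t - c * t powr - \<sigma>) * k (t * w))"
  have m: "0 < m"
    using ab by simp
  have f_eq: "f t - c * t powr - \<sigma> = (t powr \<sigma> * f t - c) * t powr - \<sigma>" if "t > 0" for t
    using that by (simp add: powr_minus field_simps)
  have "(m powr \<sigma> * f m - c) * m powr - \<sigma> \<le> \<epsilon> * m powr - \<sigma>"
    using f_near[OF m order_refl] by (intro mult_right_mono) auto
  then have f_m: "f m \<le> (c + \<epsilon>) * m powr - \<sigma>"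
    using f_eq[OF m] by (simp add: distrib_right)
  have k_cont: "continuous_on UNIV (\<lambda>t. k (t * w))"
    by (intro continuous_on_compose2[OF k(1)] continuous_intros) auto
  have k_int: "\<bar>integral {c..d} (\<lambda>t. k (t * w))\<bar> \<le> 2 / w" if "c \<le> d" for c d
    using abs_integral_rescale_le[OF k(3) w that] .
  have f_int: "(\<lambda>t. f t * k (t * w)) integrable_on {x..y}" if "0 < x" for x y
    using that by (intro integrable_continuous_real continuous_intros
        continuous_on_subset[OF continuous] continuous_on_subset[OF k_cont]) auto
  have p_int: "(\<lambda>t. t powr - \<sigma> * k (t * w)) integrable_on {x..y}" if "0 < x" for x y
    using that by (intro integrable_continuous_real continuous_intros continuous_on_subset[OF k_cont]) auto
  have split: "integral {a..b} G = integral {a..m} G + integral {m..b} G"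
    unfolding G_def using ab by (intro Henstock_Kurzweil_Integration.integral_combine[symmetric]
        integrable_continuous_real continuous_intros continuous_on_subset[OF continuous]
        continuous_on_subset[OF k_cont]) auto
  have tail: "integral {m..b} G =
      integral {m..b} (\<lambda>t. f t * k (t * w)) - c * integral {m..b} (\<lambda>t. t powr - \<sigma> * k (t * w))"
    unfolding G_def using m
    by (simp add: left_diff_distrib mult.assoc integral_diff f_int p_int integrable_on_mult_right)
  have near: "\<bar>integral {a..m} G\<bar> \<le> \<epsilon> * (m powr (1 - \<sigma>) / (1 - \<sigma>))"
  proof (rule abs_integral_le_powr_bound[OF ab(1,2) \<sigma>])
    show "continuous_on {a..m} G"
      unfolding G_def using ab by (intro continuous_intros continuous_on_subset[OF continuous]
          continuous_on_subset[OF k_cont]) auto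
    fix t assume t: "a \<le> t" "t \<le> m"
    have "\<bar>G t\<bar> \<le> \<bar>f t - c * t powr - \<sigma>\<bar>"
      using k(2)[of "t * w"] by (simp add: G_def abs_mult mult_left_le)
    also have "\<dots> = \<bar>t powr \<sigma> * f t - c\<bar> * t powr - \<sigma>"
      using f_eq[of t] ab t by (simp add: abs_mult)
    also have "\<dots> \<le> \<epsilon> * t powr - \<sigma>"
      using f_near[of t] ab t by (intro mult_right_mono) auto
    finally show "\<bar>G t\<bar> \<le> \<epsilon> * t powr - \<sigma>" .
  qed
  have "\<bar>integral {m..b} (\<lambda>t. f t * k (t * w))\<bar> \<le> 2 * f m * (2 / w)"
    using ab m nonneg antimono k_int
    by (intro abs_integral_antimono_mult_le integrable_continuous_real continuous_on_subset[OF k_cont]) auto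
  also have "\<dots> \<le> 4 * (c + \<epsilon>) * (m powr - \<sigma> / w)"
    using divide_right_mono[of "4 * f m" "4 * ((c + \<epsilon>) * m powr - \<sigma>)" w] f_m w
    by (simp add: algebra_simps add_divide_distrib)
  finally have tail_f: "\<bar>integral {m..b} (\<lambda>t. f t * k (t * w))\<bar> \<le> 4 * (c + \<epsilon>) * (m powr - \<sigma> / w)" .
  have "\<bar>integral {m..b} (\<lambda>t. t powr - \<sigma> * k (t * w))\<bar> \<le> 2 * m powr - \<sigma> * (2 / w)"
    using ab m \<sigma> k_int
    by (intro abs_integral_antimono_mult_le integrable_continuous_real continuous_on_subset[OF k_cont])
      (auto intro: powr_mono2')
  then have "c * \<bar>integral {m..b} (\<lambda>t. t powr - \<sigma> * k (t * w))\<bar> \<le> c * (2 * m powr - \<sigma> * (2 / w))"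
    using c by (rule mult_left_mono)
  then have tail_p: "\<bar>c * integral {m..b} (\<lambda>t. t powr - \<sigma> * k (t * w))\<bar> \<le> 4 * c * (m powr - \<sigma> / w)"
    using c by (simp add: abs_mult ac_simps)
  have "\<bar>integral {a..b} G\<bar> \<le> \<epsilon> * (m powr (1 - \<sigma>) / (1 - \<sigma>)) + 4 * (c + \<epsilon>) * (m powr - \<sigma> / w) +
      4 * c * (m powr - \<sigma> / w)"
    using split tail near tail_f tail_p by linarith
  then show ?thesis
    unfolding G_def by (simp add: algebra_simps)
qed

lemma rescaled_integral_bound:
  fixes k :: "real \<Rightarrow> real"
  assumes k: "continuous_on UNIV k" "\<And>x. \<bar>k x\<bar> \<le> 1" "\<And>c d. c \<le> d \<Longrightarrow> \<bar>integral {c..d} k\<bar> \<le> 2"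
    and K: "has_improper_integral_0_inf (\<lambda>u. u powr - \<sigma> * k u) K"
    and \<sigma>: "0 \<le> \<sigma>" "\<sigma> < 1" and c: "0 \<le> c" and w: "w > 0" and U: "U > 0"
    and f_near: "\<And>t. 0 < t \<Longrightarrow> t \<le> U / w \<Longrightarrow> \<bar>t powr \<sigma> * f t - c\<bar> \<le> \<epsilon>"
  shows "\<bar>w powr (1 - \<sigma>) * improper_integral_0_inf (\<lambda>t. f t * k (t * w)) - c * K\<bar> \<le>
    \<epsilon> * U powr (1 - \<sigma>) / (1 - \<sigma>) + 4 * (2 * c + \<epsilon>) * U powr - \<sigma>"
proof -
  define m where "m = U / w"
  have m: "0 < m"
    using U w by (simp add: m_def)
  have f_le: "f t \<le> (c + \<epsilon>) * t powr - \<sigma>" if "0 < t" "t \<le> m" for t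
  proof -
    have "f t = (t powr \<sigma> * f t) * t powr - \<sigma>"
      using that(1) by (simp add: powr_minus field_simps)
    also have "\<dots> \<le> (c + \<epsilon>) * t powr - \<sigma>"
      using f_near[of t] that by (intro mult_right_mono) (auto simp: m_def)
    finally show ?thesis .
  qed
  have D: "has_improper_integral_0_inf (\<lambda>t. w powr (1 - \<sigma>) * ((f t - c * t powr - \<sigma>) * k (t * w)))
      (w powr (1 - \<sigma>) * improper_integral_0_inf (\<lambda>t. f t * k (t * w)) - c * K)"
    using f_le by (intro has_improper_integral_rescaled_comparison[OF k K \<sigma> w m, of "c + \<epsilon>"]) auto
  have "w powr (1 - \<sigma>) * m powr (1 - \<sigma>) = U powr (1 - \<sigma>)"
    using w U by (simp add: m_def powr_divide)
  moreover have "w powr (1 - \<sigma>) * (m powr - \<sigma> / w) = U powr - \<sigma>"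
    using w U by (simp add: m_def powr_divide powr_diff powr_minus field_simps)
  moreover have "w powr (1 - \<sigma>) *
      (\<epsilon> * (m powr (1 - \<sigma>) / (1 - \<sigma>)) + 4 * (2 * c + \<epsilon>) * (m powr - \<sigma> / w)) =
      \<epsilon> * (w powr (1 - \<sigma>) * m powr (1 - \<sigma>)) / (1 - \<sigma>) +
      4 * (2 * c + \<epsilon>) * (w powr (1 - \<sigma>) * (m powr - \<sigma> / w))"
    by (simp add: algebra_simps)
  ultimately have scale: "w powr (1 - \<sigma>) *
      (\<epsilon> * (m powr (1 - \<sigma>) / (1 - \<sigma>)) + 4 * (2 * c + \<epsilon>) * (m powr - \<sigma> / w)) =
      \<epsilon> * U powr (1 - \<sigma>) / (1 - \<sigma>) + 4 * (2 * c + \<epsilon>) * U powr - \<sigma>"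
    by (simp only:)
  have "\<bar>w powr (1 - \<sigma>) * improper_integral_0_inf (\<lambda>t. f t * k (t * w)) - c * K - 0\<bar> \<le>
      \<epsilon> * U powr (1 - \<sigma>) / (1 - \<sigma>) + 4 * (2 * c + \<epsilon>) * U powr - \<sigma>"
  proof (rule has_improper_integral_0_inf_bound[OF D m tendsto_const tendsto_const])
    fix a b assume "0 < a" "a < m" "m < b"
    then have "\<bar>integral {a..b} (\<lambda>t. (f t - c * t powr - \<sigma>) * k (t * w))\<bar> \<le>
        \<epsilon> * (m powr (1 - \<sigma>) / (1 - \<sigma>)) + 4 * (2 * c + \<epsilon>) * (m powr - \<sigma> / w)"
      using f_near by (intro abs_integral_comparison_le[OF k \<sigma> c w]) (auto simp: m_def)
    then show "\<bar>integral {a..b} (\<lambda>t. w powr (1 - \<sigma>) * ((f t - c * t powr - \<sigma>) * k (t * w))) - 0\<bar> \<le>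
        0 + 0 + (\<epsilon> * U powr (1 - \<sigma>) / (1 - \<sigma>) + 4 * (2 * c + \<epsilon>) * U powr - \<sigma>)"
      unfolding scale[symmetric] by (simp add: abs_mult mult_left_mono)
  qed
  then show ?thesis
    by simp
qed

lemma rescaled_integral_tendsto:
  fixes k :: "real \<Rightarrow> real"
  assumes k: "continuous_on UNIV k" "\<And>x. \<bar>k x\<bar> \<le> 1" "\<And>c d. c \<le> d \<Longrightarrow> \<bar>integral {c..d} k\<bar> \<le> 2"
    and K: "has_improper_integral_0_inf (\<lambda>u. u powr - \<sigma> * k u) K"
    and \<sigma>: "0 < \<sigma>" "\<sigma> < 1" and c: "0 \<le> c"
    and f_growth: "((\<lambda>t. t powr \<sigma> * f t) \<longlongrightarrow> c) (at_right 0)"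
  shows "((\<lambda>w. w powr (1 - \<sigma>) * improper_integral_0_inf (\<lambda>t. f t * k (t * w))) \<longlongrightarrow> c * K) at_top"
  unfolding tendsto_iff
proof (intro allI impI)
  fix e :: real assume e: "e > 0"
  have "((\<lambda>U. 4 * (2 * c + 1) * U powr - \<sigma>) \<longlongrightarrow> 0) at_top"
    using \<sigma> by real_asymp
  from order_tendstoD(2)[OF this half_gt_zero[OF e]]
  have "eventually (\<lambda>U. U > 0 \<and> 4 * (2 * c + 1) * U powr - \<sigma> < e / 2) at_top"
    using eventually_gt_at_top[of 0] by eventually_elim simp
  from eventually_happens[OF this]
  obtain U where U: "U > 0" "4 * (2 * c + 1) * U powr - \<sigma> < e / 2"
    by auto
  define \<epsilon> where "\<epsilon> = min 1 (e * (1 - \<sigma>) / (2 * U powr (1 - \<sigma>)))"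
  have \<epsilon>: "\<epsilon> > 0" "\<epsilon> \<le> 1"
    using e \<sigma> U by (auto simp: \<epsilon>_def)
  have "\<epsilon> \<le> e * (1 - \<sigma>) / (2 * U powr (1 - \<sigma>))"
    by (simp add: \<epsilon>_def)
  then have "\<epsilon> * U powr (1 - \<sigma>) \<le> e * (1 - \<sigma>) / 2"
    using U(1) by (simp add: pos_le_divide_eq mult.commute mult.left_commute)
  then have \<epsilon>_U: "\<epsilon> * U powr (1 - \<sigma>) / (1 - \<sigma>) \<le> e / 2"
    using \<sigma> by (simp add: field_simps)
  from tendstoD[OF f_growth \<epsilon>(1)]
  obtain \<delta> where \<delta>: "\<delta> > 0" "\<And>t. 0 < t \<Longrightarrow> t < \<delta> \<Longrightarrow> \<bar>t powr \<sigma> * f t - c\<bar> < \<epsilon>"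
    by (auto simp: eventually_at_right_field dist_real_def)
  show "eventually (\<lambda>w. dist (w powr (1 - \<sigma>) * improper_integral_0_inf (\<lambda>t. f t * k (t * w))) (c * K) < e)
      at_top"
    using eventually_gt_at_top[of "U / \<delta>"]
  proof eventually_elim
    case (elim w)
    have w: "w > 0"
      using elim U(1) \<delta>(1) by (meson divide_pos_pos less_trans)
    then have "U / w < \<delta>"
      using elim \<delta>(1) by (simp add: field_simps)
    then have "\<bar>w powr (1 - \<sigma>) * improper_integral_0_inf (\<lambda>t. f t * k (t * w)) - c * K\<bar> \<le>
        \<epsilon> * U powr (1 - \<sigma>) / (1 - \<sigma>) + 4 * (2 * c + \<epsilon>) * U powr - \<sigma>"
      using \<sigma> c w U(1) \<delta>(2) by (intro rescaled_integral_bound[OF k K]) (auto intro: less_imp_le)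
    also have "4 * (2 * c + \<epsilon>) * U powr - \<sigma> \<le> 4 * (2 * c + 1) * U powr - \<sigma>"
      using \<epsilon>(2) by (intro mult_right_mono) auto
    finally show ?case
      unfolding dist_real_def using \<epsilon>_U U(2) by linarith
  qed
qed

lemma Fcos_singular_asymptotic:
  assumes \<sigma>: "0 < \<sigma>" "\<sigma> < 1" and c: "c > 0" "((\<lambda>t. t powr \<sigma> * f t) \<longlongrightarrow> c) (at_right 0)"
  shows "((\<lambda>\<omega>. \<omega> powr (1 - \<sigma>) * Fcos f \<omega>) \<longlongrightarrow> c * improper_integral_0_inf (\<lambda>u. u powr - \<sigma> * cos u)) at_top"
proof -
  have "has_improper_integral_0_inf (\<lambda>u. u powr - \<sigma> * cos u) (improper_integral_0_inf (\<lambda>u. u powr - \<sigma> * cos u))"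
    by (rule has_improper_integral_powr_neg_mult[OF \<sigma> _ _ abs_integral_cos_le]) (auto intro: continuous_intros)
  then show ?thesis
    unfolding Fcos_def using \<sigma> c
    by (intro rescaled_integral_tendsto[OF _ _ abs_integral_cos_le]) (auto intro: continuous_intros)
qed

lemma Fsin_singular_asymptotic:
  assumes \<sigma>: "0 < \<sigma>" "\<sigma> < 1" and c: "c > 0" "((\<lambda>t. t powr \<sigma> * f t) \<longlongrightarrow> c) (at_right 0)"
  shows "((\<lambda>\<omega>. \<omega> powr (1 - \<sigma>) * Fsin f \<omega>) \<longlongrightarrow> c * improper_integral_0_inf (\<lambda>u. u powr - \<sigma> * sin u)) at_top"
proof -
  have "has_improper_integral_0_inf (\<lambda>u. u powr - \<sigma> * sin u) (improper_integral_0_inf (\<lambda>u. u powr - \<sigma> * sin u))"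
    by (rule has_improper_integral_powr_neg_mult[OF \<sigma> _ _ abs_integral_sin_le]) (auto intro: continuous_intros)
  then show ?thesis
    unfolding Fsin_def using \<sigma> c
    by (intro rescaled_integral_tendsto[OF _ _ abs_integral_sin_le]) (auto intro: continuous_intros)
qed

end

theorem proposition3p3:
  fixes f f' f'' :: "real \<Rightarrow> real"
  assumes lim_inf: "(f \<longlongrightarrow> 0) at_top"
    and ev_decr: "\<exists>T. \<forall>s t. T \<le> s \<longrightarrow> s \<le> t \<longrightarrow> f t \<le> f s"
    and d1: "\<And>t. t > 0 \<Longrightarrow> (f has_real_derivative f' t) (at t)"
    and d2: "\<And>t. t > 0 \<Longrightarrow> (f' has_real_derivative f'' t) (at t)"
    and c2: "continuous_on {0<..} f''"
    and cvx: "convex_on {0<..} f"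
    and mono2: "\<exists>\<epsilon>>0. mono_on {0<..<\<epsilon>} f'' \<or> antimono_on {0<..<\<epsilon>} f''"
  shows
    "(\<forall>\<sigma>1. (f \<longlongrightarrow> f 0) (at_right 0) \<and> 0 < \<sigma>1 \<and> \<sigma>1 < 1 \<and>
          ((\<lambda>t. t powr \<sigma>1 * f' t) \<longlongrightarrow> 0) (at_right 0) \<longrightarrow>
        ((\<lambda>\<omega>. \<omega> powr (2 - \<sigma>1) * Fcos f \<omega>) \<longlongrightarrow> 0) at_top \<and>
        ((\<lambda>\<omega>. \<omega> * Fsin f \<omega>) \<longlongrightarrow> f 0) at_top)
   \<and>
    (\<forall>\<sigma>2. filterlim f at_top (at_right 0) \<and> 0 < \<sigma>2 \<and> \<sigma>2 < 1 \<and>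
          (\<exists>c>0. ((\<lambda>t. t powr \<sigma>2 * f t) \<longlongrightarrow> c) (at_right 0)) \<longrightarrow>
        (\<exists>L>0. ((\<lambda>\<omega>. \<omega> powr (1 - \<sigma>2) * Fcos f \<omega>) \<longlongrightarrow> L) at_top) \<and>
        (\<exists>L>0. ((\<lambda>\<omega>. \<omega> powr (1 - \<sigma>2) * Fsin f \<omega>) \<longlongrightarrow> L) at_top))"
proof -
  interpret convex_decay f f'
    using lim_inf d1 cvx by unfold_locales
  have f'_cont: "continuous_on {0<..} f'"
    using d2 by (intro continuous_at_imp_continuous_on) (auto intro: DERIV_isCont)
  show ?thesis
  proof (intro conjI allI impI)
    fix \<sigma> :: real
    assume "(f \<longlongrightarrow> f 0) (at_right 0) \<and> 0 < \<sigma> \<and> \<sigma> < 1 \<and> ((\<lambda>t. t powr \<sigma> * f' t) \<longlongrightarrow> 0) (at_right 0)"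
    then show "((\<lambda>\<omega>. \<omega> powr (2 - \<sigma>) * Fcos f \<omega>) \<longlongrightarrow> 0) at_top"
      and "((\<lambda>\<omega>. \<omega> * Fsin f \<omega>) \<longlongrightarrow> f 0) at_top"
      by (auto intro: Fcos_decay Fsin_asymptotic f'_cont)
  next
    fix \<sigma> :: real
    assume "filterlim f at_top (at_right 0) \<and> 0 < \<sigma> \<and> \<sigma> < 1 \<and>
      (\<exists>c>0. ((\<lambda>t. t powr \<sigma> * f t) \<longlongrightarrow> c) (at_right 0))"
    then obtain c where \<sigma>: "0 < \<sigma>" "\<sigma> < 1" and c: "c > 0" "((\<lambda>t. t powr \<sigma> * f t) \<longlongrightarrow> c) (at_right 0)"
      by auto
    have "c * improper_integral_0_inf (\<lambda>u. u powr - \<sigma> * cos u) > 0"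
      "c * improper_integral_0_inf (\<lambda>u. u powr - \<sigma> * sin u) > 0"
      using improper_integral_powr_cos_pos[OF \<sigma>] improper_integral_powr_sin_pos[OF \<sigma>] c by simp_all
    with Fcos_singular_asymptotic[OF \<sigma> c] Fsin_singular_asymptotic[OF \<sigma> c]
    show "\<exists>L>0. ((\<lambda>\<omega>. \<omega> powr (1 - \<sigma>) * Fcos f \<omega>) \<longlongrightarrow> L) at_top"
      and "\<exists>L>0. ((\<lambda>\<omega>. \<omega> powr (1 - \<sigma>) * Fsin f \<omega>) \<longlongrightarrow> L) at_top"
      by blast+
  qed
qed

end
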